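(* Let $X$ be a Tychonoff space and let $\mathcal{H}$ be a subspace with $\mathcal{F}_2(X)\subset\mathcal{H}\subset\mathcal{K}(X)$. Then the following are equivalent: (a) $X$ is a $P$-space; (b) $\mathcal{H}$ is a $P$-space; (c) $\mathcal{H}$ is an $F'$-space.
   Context: For a $T_1$ space $X$, $\mathcal{K}(X)$ is the set of nonempty compact subsets of $X$ with the Vietoris topology (generated by $U^+=\{A: A\subset U\}$ and $U^-=\{A: A\cap U\neq\emptyset\}$ for $U$ open in $X$), and $\mathcal{F}_n(X)\subset\mathcal{K}(X)$ is the subspace of nonempty subsets with at most $n$ points. A point $p$ is a $P$-point of $X$ if $p$ lies in the interior of every $G_\delta$ set containing it; $X$ is a $P$-space if all its points are $P$-points. A cozero set is the complement of the zero set $f^{-1}(0)$ of a continuous real-valued function $f$. An $F'$-space is a Tychonoff space in which any two disjoint cozero sets have disjoint closures. *)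

theory Defs
  imports "HOL-Analysis.Analysis"
begin

definition tychonoff_space :: "'a topology \<Rightarrow> bool" where
  "tychonoff_space X \<longleftrightarrow> completely_regular_space X \<and> t1_space X"

definition hyp_K :: "'a topology \<Rightarrow> 'a set set" where
  "hyp_K X = {A. A \<noteq> {} \<and> compactin X A}"

definition hyp_F :: "nat \<Rightarrow> 'a topology \<Rightarrow> 'a set set" where
  "hyp_F n X = {A. A \<noteq> {} \<and> A \<subseteq> topspace X \<and> finite A \<and> card A \<le> n}"

definition vietoris :: "'a topology \<Rightarrow> 'a set topology" where
  "vietoris X = topology_generated_by
     ({{A \<in> hyp_K X. A \<subseteq> U} | U. openin X U} \<union>
      {{A \<in> hyp_K X. A \<inter> U \<noteq> {}} | U. openin X U})"

definition p_point :: "'a topology \<Rightarrow> 'a \<Rightarrow> bool" where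
  "p_point X p \<longleftrightarrow> p \<in> topspace X \<and>
     (\<forall>G. gdelta_in X G \<and> p \<in> G \<longrightarrow> p \<in> X interior_of G)"

definition p_space :: "'a topology \<Rightarrow> bool" where
  "p_space X \<longleftrightarrow> (\<forall>p \<in> topspace X. p_point X p)"

definition cozero_set :: "'a topology \<Rightarrow> 'a set \<Rightarrow> bool" where
  "cozero_set X C \<longleftrightarrow>
     (\<exists>f. continuous_map X euclideanreal f \<and> C = {x \<in> topspace X. f x \<noteq> 0})"

definition f_prime_space :: "'a topology \<Rightarrow> bool" where
  "f_prime_space X \<longleftrightarrow> tychonoff_space X \<and>
     (\<forall>C D. cozero_set X C \<and> cozero_set X D \<and> C \<inter> D = {} \<longrightarrow>
            X closure_of C \<inter> X closure_of D = {})"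

end

theory Submission
  imports Defs
begin

text \<open>In a \<open>T\<^sub>1\<close> P-space compact sets are finite, and at a finite \<open>A\<close> the Vietoris boxes
  \<open>\<langle>U\<^sub>a : a \<in> A\<rangle>\<close> form a local base; a countable family of them is refined by a single box,
  because each of the finitely many coordinates can be shrunk into a countable intersection.
  Hence (a) gives (b); conversely \<open>x \<mapsto> {x}\<close> embeds \<open>X\<close> into \<open>\<H>\<close>, so (b) gives (a).
  In a P-space zero sets are open, so cozero sets are closed and (with (a)) the hyperspace is
  zero-dimensional, hence Tychonoff: (b) gives (c).
  If \<open>p\<close> is not a P-point there is a continuous \<open>F \<ge> 0\<close> with \<open>F p = 0\<close> and \<open>p\<close> in the
  closure of \<open>{F > 0}\<close>; then \<open>g A = max F[A] - 2 min F[A]\<close> is continuous on \<open>\<H>\<close>, negative at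
  \<open>{x}\<close> and positive at \<open>{p, x}\<close> whenever \<open>F x > 0\<close>, so \<open>{p}\<close> lies in the closures of the
  disjoint cozero sets \<open>{g > 0}\<close> and \<open>{g < 0}\<close>, contradicting (c).\<close>

section \<open>Vietoris boxes\<close>

definition vietoris_box :: "'a topology \<Rightarrow> 'a set \<Rightarrow> ('a \<Rightarrow> 'a set) \<Rightarrow> 'a set set" where
  "vietoris_box X A U = {B \<in> hyp_K X. B \<subseteq> \<Union>(U ` A) \<and> (\<forall>a\<in>A. B \<inter> U a \<noteq> {})}"

lemma hyp_K_subset_topspace: "A \<in> hyp_K X \<Longrightarrow> A \<subseteq> topspace X"
  by (simp add: hyp_K_def compactin_subset_topspace)

lemma finite_in_hyp_K: "finite A \<Longrightarrow> A \<noteq> {} \<Longrightarrow> A \<subseteq> topspace X \<Longrightarrow> A \<in> hyp_K X"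
  by (simp add: hyp_K_def finite_imp_compactin)

lemma doubleton_in_hyp_F_2: "x \<in> topspace X \<Longrightarrow> y \<in> topspace X \<Longrightarrow> {x, y} \<in> hyp_F 2 X"
  by (simp add: hyp_F_def card_insert_if)

lemma topspace_vietoris: "topspace (vietoris X) = hyp_K X"
proof -
  have "hyp_K X \<subseteq> {A \<in> hyp_K X. A \<subseteq> topspace X}" using hyp_K_subset_topspace by blast
  then show ?thesis unfolding vietoris_def topology_generated_by_topspace by blast
qed

lemma openin_vietoris_upper: "openin X U \<Longrightarrow> openin (vietoris X) {A \<in> hyp_K X. A \<subseteq> U}"
  unfolding vietoris_def by (rule topology_generated_by_Basis) blast

lemma openin_vietoris_lower: "openin X U \<Longrightarrow> openin (vietoris X) {A \<in> hyp_K X. A \<inter> U \<noteq> {}}"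
  unfolding vietoris_def by (rule topology_generated_by_Basis) blast

lemma closedin_vietoris_upper:
  assumes "closedin X U"
  shows "closedin (vietoris X) {A \<in> hyp_K X. A \<subseteq> U}"
proof -
  have "topspace (vietoris X) - {A \<in> hyp_K X. A \<subseteq> U} = {A \<in> hyp_K X. A \<inter> (topspace X - U) \<noteq> {}}"
    using hyp_K_subset_topspace by (auto simp: topspace_vietoris)
  then show ?thesis
    using assms openin_vietoris_lower[of X "topspace X - U"]
    by (simp add: closedin_def topspace_vietoris openin_diff)
qed

lemma closedin_vietoris_lower:
  assumes "closedin X U"
  shows "closedin (vietoris X) {A \<in> hyp_K X. A \<inter> U \<noteq> {}}"
proof -
  have "topspace (vietoris X) - {A \<in> hyp_K X. A \<inter> U \<noteq> {}} = {A \<in> hyp_K X. A \<subseteq> topspace X - U}"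
    using hyp_K_subset_topspace by (auto simp: topspace_vietoris)
  then show ?thesis
    using assms openin_vietoris_upper[of X "topspace X - U"]
    by (simp add: closedin_def topspace_vietoris openin_diff)
qed

lemma vietoris_box_mono: "(\<And>a. a \<in> A \<Longrightarrow> U a \<subseteq> V a) \<Longrightarrow> vietoris_box X A U \<subseteq> vietoris_box X A V"
  unfolding vietoris_box_def by blast

lemma mem_vietoris_box_self: "A \<in> hyp_K X \<Longrightarrow> (\<And>a. a \<in> A \<Longrightarrow> a \<in> U a) \<Longrightarrow> A \<in> vietoris_box X A U"
  unfolding vietoris_box_def by blast

lemma vietoris_box_eq_Int:
  "A \<noteq> {} \<Longrightarrow> vietoris_box X A U =
     {B \<in> hyp_K X. B \<subseteq> \<Union>(U ` A)} \<inter> (\<Inter>a\<in>A. {B \<in> hyp_K X. B \<inter> U a \<noteq> {}})"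
  unfolding vietoris_box_def by blast

lemma openin_vietoris_box:
  assumes "finite A" "A \<noteq> {}" "\<And>a. a \<in> A \<Longrightarrow> openin X (U a)"
  shows "openin (vietoris X) (vietoris_box X A U)"
  unfolding vietoris_box_eq_Int[OF assms(2)]
  using assms by (intro openin_Int openin_vietoris_upper openin_Inter) (auto intro: openin_vietoris_lower)

lemma closedin_vietoris_box:
  assumes "finite A" "A \<noteq> {}" "\<And>a. a \<in> A \<Longrightarrow> closedin X (U a)"
  shows "closedin (vietoris X) (vietoris_box X A U)"
  unfolding vietoris_box_eq_Int[OF assms(2)]
  using assms
  by (intro closedin_Int closedin_vietoris_upper closedin_Inter closedin_Union)
     (auto intro: closedin_vietoris_lower)

lemma vietoris_subbasic_box:
  assumes "W \<in> {{A \<in> hyp_K X. A \<subseteq> V} | V. openin X V} \<union> {{A \<in> hyp_K X. A \<inter> V \<noteq> {}} | V. openin X V}"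
    and A: "A \<in> W"
  shows "\<exists>U. (\<forall>a\<in>A. openin X (U a) \<and> a \<in> U a) \<and> vietoris_box X A U \<subseteq> W"
proof -
  from assms(1) consider V where "openin X V" "W = {A \<in> hyp_K X. A \<subseteq> V}"
    | V where "openin X V" "W = {A \<in> hyp_K X. A \<inter> V \<noteq> {}}"
    by blast
  then show ?thesis
  proof cases
    case (1 V)
    then have "vietoris_box X A (\<lambda>_. V) \<subseteq> W" "\<forall>a\<in>A. openin X V \<and> a \<in> V"
      using A by (auto simp: vietoris_box_def)
    then show ?thesis by (intro exI[of _ "\<lambda>_. V"]) simp
  next
    case (2 V)
    then obtain a0 where a0: "a0 \<in> A" "a0 \<in> V" using A by blast
    \<comment> \<open>only the component at \<open>a0\<close> has to be shrunk\<close>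
    define U where "U a = (if a = a0 then V else topspace X)" for a
    have "vietoris_box X A U \<subseteq> W"
      using 2 a0 unfolding vietoris_box_def U_def by auto
    moreover have "\<forall>a\<in>A. openin X (U a) \<and> a \<in> U a"
      using 2 A a0 hyp_K_subset_topspace unfolding U_def by auto
    ultimately show ?thesis by (intro exI[of _ U]) simp
  qed
qed

lemma vietoris_box_local_base:
  assumes "openin (vietoris X) W" "A \<in> W"
  shows "\<exists>U. (\<forall>a\<in>A. openin X (U a) \<and> a \<in> U a) \<and> vietoris_box X A U \<subseteq> W"
proof -
  have boxes: "\<forall>A\<in>W. \<exists>U. (\<forall>a\<in>A. openin X (U a) \<and> a \<in> U a) \<and> vietoris_box X A U \<subseteq> W"
    if "generate_topology_on
          ({{A \<in> hyp_K X. A \<subseteq> U} | U. openin X U} \<union>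
           {{A \<in> hyp_K X. A \<inter> U \<noteq> {}} | U. openin X U}) W" for W
    using that
  proof induction
    case Empty
    then show ?case by simp
  next
    case (Int W1 W2)
    show ?case
    proof
      fix A assume A: "A \<in> W1 \<inter> W2"
      obtain U1 where U1: "\<forall>a\<in>A. openin X (U1 a) \<and> a \<in> U1 a" "vietoris_box X A U1 \<subseteq> W1"
        using Int.IH(1) A by blast
      obtain U2 where U2: "\<forall>a\<in>A. openin X (U2 a) \<and> a \<in> U2 a" "vietoris_box X A U2 \<subseteq> W2"
        using Int.IH(2) A by blast
      have "vietoris_box X A (\<lambda>a. U1 a \<inter> U2 a) \<subseteq> vietoris_box X A U1"
        "vietoris_box X A (\<lambda>a. U1 a \<inter> U2 a) \<subseteq> vietoris_box X A U2"
        by (rule vietoris_box_mono, blast)+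
      with U1 U2 show "\<exists>U. (\<forall>a\<in>A. openin X (U a) \<and> a \<in> U a) \<and> vietoris_box X A U \<subseteq> W1 \<inter> W2"
        by (intro exI[of _ "\<lambda>a. U1 a \<inter> U2 a"]) auto
    qed
  next
    case (UN \<W>)
    show ?case
    proof
      fix A assume "A \<in> \<Union>\<W>"
      then obtain V where "V \<in> \<W>" "A \<in> V" by blast
      then obtain U where "\<forall>a\<in>A. openin X (U a) \<and> a \<in> U a" "vietoris_box X A U \<subseteq> V"
        using UN.IH by blast
      with \<open>V \<in> \<W>\<close> show "\<exists>U. (\<forall>a\<in>A. openin X (U a) \<and> a \<in> U a) \<and> vietoris_box X A U \<subseteq> \<Union>\<W>"
        by blast
    qed
  next
    case (Basis W)
    then show ?case by (intro ballI vietoris_subbasic_box)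
  qed
  then show ?thesis
    using assms unfolding vietoris_def openin_topology_generated_by_iff by simp
qed

lemma vietoris_box_local_base_subtopology:
  assumes "openin (subtopology (vietoris X) H) W" "A \<in> W"
  shows "\<exists>U. (\<forall>a\<in>A. openin X (U a) \<and> a \<in> U a) \<and> H \<inter> vietoris_box X A U \<subseteq> W"
proof -
  obtain W' where W': "openin (vietoris X) W'" "W = W' \<inter> H"
    using assms(1) unfolding openin_subtopology by blast
  with assms(2) obtain U where U: "\<forall>a\<in>A. openin X (U a) \<and> a \<in> U a" "vietoris_box X A U \<subseteq> W'"
    using vietoris_box_local_base[OF W'(1)] by blast
  with W'(2) show ?thesis by (intro exI[of _ U]) blast
qed

lemma vietoris_singleton_local_base:
  assumes "openin (subtopology (vietoris X) H) W" "{p} \<in> W"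
  shows "\<exists>U. openin X U \<and> p \<in> U \<and> H \<inter> {B \<in> hyp_K X. B \<subseteq> U} \<subseteq> W"
proof -
  obtain U where U: "openin X (U p)" "p \<in> U p" "H \<inter> vietoris_box X {p} U \<subseteq> W"
    using vietoris_box_local_base_subtopology[OF assms] by auto
  moreover have "{B \<in> hyp_K X. B \<subseteq> U p} \<subseteq> vietoris_box X {p} U"
    unfolding vietoris_box_def hyp_K_def by blast
  ultimately show ?thesis by (intro exI[of _ "U p"]) blast
qed

section \<open>P-spaces\<close>

lemma p_space_iff_countable_Inter:
  "p_space X \<longleftrightarrow>
     (\<forall>x \<U>. x \<in> topspace X \<and> countable \<U> \<and> (\<forall>U\<in>\<U>. openin X U \<and> x \<in> U)
        \<longrightarrow> x \<in> X interior_of \<Inter>\<U>)"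
proof (intro iffI allI impI)
  fix x \<U> assume P: "p_space X"
    and x\<U>: "x \<in> topspace X \<and> countable \<U> \<and> (\<forall>U\<in>\<U>. openin X U \<and> x \<in> U)"
  have "gdelta_in X (\<Inter>(insert (topspace X) \<U>))"
    using x\<U> by (intro gdelta_in_Inter) (auto intro: open_imp_gdelta_in)
  then have "x \<in> X interior_of \<Inter>(insert (topspace X) \<U>)"
    using P x\<U> unfolding p_space_def p_point_def by blast
  then show "x \<in> X interior_of \<Inter>\<U>"
    by (meson Inter_anti_mono interior_of_mono subset_insertI subsetD)
next
  assume H: "\<forall>x \<U>. x \<in> topspace X \<and> countable \<U> \<and> (\<forall>U\<in>\<U>. openin X U \<and> x \<in> U)
               \<longrightarrow> x \<in> X interior_of \<Inter>\<U>"
  show "p_space X"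
    unfolding p_space_def p_point_def
  proof (intro ballI conjI allI impI)
    fix x G assume "x \<in> topspace X" and G: "gdelta_in X G \<and> x \<in> G"
    then obtain \<U> where "countable \<U>" "\<U> \<subseteq> Collect (openin X)" "\<Inter>\<U> = G"
      unfolding gdelta_in_alt intersection_of_def by blast
    with H \<open>x \<in> topspace X\<close> G show "x \<in> X interior_of G" by blast
  qed
qed

lemma p_space_countable_Inter_nbhd:
  assumes "p_space X" "x \<in> topspace X" "countable \<U>" "\<And>U. U \<in> \<U> \<Longrightarrow> openin X U \<and> x \<in> U"
  shows "\<exists>V. openin X V \<and> x \<in> V \<and> V \<subseteq> \<Inter>\<U>"
proof -
  have "x \<in> X interior_of \<Inter>\<U>"
    using assms(1) assms(2-4) unfolding p_space_iff_countable_Inter by simp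
  then show ?thesis unfolding interior_of_def by blast
qed

lemma finite_compactin_p_space:
  assumes P: "p_space X" and "t1_space X" and K: "compactin X A"
  shows "finite A"
proof (rule ccontr)
  assume "infinite A"
  then obtain C where C: "C \<subseteq> A" "countable C" "infinite C"
    using infinite_countable_subset' by blast
  have A: "A \<subseteq> topspace X" using K compactin_subset_topspace by blast
  \<comment> \<open>every point has a neighbourhood meeting \<open>C\<close> in at most itself\<close>
  have "\<exists>V. openin X V \<and> x \<in> V \<and> finite (V \<inter> C)" if x: "x \<in> topspace X" for x
  proof -
    define \<U> where "\<U> = (\<lambda>c. topspace X - {c}) ` (C - {x})"
    have "countable \<U>" using C by (simp add: \<U>_def)
    moreover have "openin X U \<and> x \<in> U" if "U \<in> \<U>" for U
      using that C A x \<open>t1_space X\<close>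
      by (auto simp: \<U>_def intro!: openin_diff closedin_t1_singleton)
    ultimately have "\<exists>V. openin X V \<and> x \<in> V \<and> V \<subseteq> \<Inter>\<U>"
      by (rule p_space_countable_Inter_nbhd[OF P x])
    then obtain V where V: "openin X V" "x \<in> V" "V \<subseteq> \<Inter>\<U>" by blast
    then have "V \<inter> C \<subseteq> {x}" unfolding \<U>_def by blast
    with V show ?thesis by (meson finite.emptyI finite_insert finite_subset)
  qed
  then have "A \<subseteq> \<Union>{V. openin X V \<and> finite (V \<inter> C)}" using A by blast
  then obtain \<F> where \<F>: "finite \<F>" "\<F> \<subseteq> {V. openin X V \<and> finite (V \<inter> C)}" "A \<subseteq> \<Union>\<F>"
    using compactinD[OF K] by (metis (no_types, lifting) mem_Collect_eq)
  then have "C \<subseteq> (\<Union>V\<in>\<F>. V \<inter> C)" using C by blast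
  moreover have "finite (\<Union>V\<in>\<F>. V \<inter> C)" using \<F> by blast
  ultimately show False using C finite_subset by blast
qed

lemma openin_zero_set_p_space:
  assumes P: "p_space Y" and g: "continuous_map Y euclideanreal g"
  shows "openin Y {x \<in> topspace Y. g x = 0}"
proof (subst openin_subopen, intro ballI)
  fix x assume x: "x \<in> {x \<in> topspace Y. g x = 0}"
  define \<U> where "\<U> = range (\<lambda>n::nat. {y \<in> topspace Y. \<bar>g y\<bar> < inverse (Suc n)})"
  have "countable \<U>" by (simp add: \<U>_def)
  moreover have "openin Y U \<and> x \<in> U" if "U \<in> \<U>" for U
    using that x continuous_map_real_abs[OF g]
    by (auto simp: \<U>_def continuous_map_upper_lower_semicontinuous_lt)
  ultimately have "\<exists>V. openin Y V \<and> x \<in> V \<and> V \<subseteq> \<Inter>\<U>"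
    using x by (intro p_space_countable_Inter_nbhd[OF P]) auto
  then obtain V where V: "openin Y V" "x \<in> V" "V \<subseteq> \<Inter>\<U>" by blast
  have "\<Inter>\<U> \<subseteq> {y \<in> topspace Y. g y = 0}"
  proof
    fix y assume y: "y \<in> \<Inter>\<U>"
    then have "y \<in> topspace Y" "\<forall>n. \<bar>g y\<bar> < inverse (Suc n)" by (auto simp: \<U>_def)
    moreover have "g y = 0"
    proof (rule ccontr)
      assume "g y \<noteq> 0"
      then obtain n where "inverse (Suc n) < \<bar>g y\<bar>" using reals_Archimedean[of "\<bar>g y\<bar>"] by auto
      with \<open>\<forall>n. \<bar>g y\<bar> < inverse (Suc n)\<close> show False by (meson order.asym)
    qed
    ultimately show "y \<in> {y \<in> topspace Y. g y = 0}" by simp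
  qed
  with V show "\<exists>V. openin Y V \<and> x \<in> V \<and> V \<subseteq> {x \<in> topspace Y. g x = 0}"
    by (meson order_trans)
qed

lemma closedin_cozero_set_p_space:
  assumes "p_space Y" "cozero_set Y C"
  shows "closedin Y C"
proof -
  obtain g where g: "continuous_map Y euclideanreal g" "C = {x \<in> topspace Y. g x \<noteq> 0}"
    using assms(2) unfolding cozero_set_def by blast
  have "topspace Y - C = {x \<in> topspace Y. g x = 0}" using g by auto
  with openin_zero_set_p_space[OF assms(1) g(1)] g show ?thesis
    by (simp add: closedin_def)
qed

lemma p_space_imp_f_prime_space:
  assumes "p_space Y" "tychonoff_space Y"
  shows "f_prime_space Y"
  unfolding f_prime_space_def
proof (intro conjI allI impI)
  fix C D assume CD: "cozero_set Y C \<and> cozero_set Y D \<and> C \<inter> D = {}"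
  then have "closedin Y C" "closedin Y D"
    using closedin_cozero_set_p_space[OF assms(1)] by blast+
  with CD show "Y closure_of C \<inter> Y closure_of D = {}"
    by (simp add: closure_of_closedin)
qed (rule assms(2))

lemma p_space_dim_le_0:
  assumes P: "p_space X" and CR: "completely_regular_space X"
  shows "X dim_le 0"
proof -
  have "\<exists>U. (closedin X U \<and> openin X U) \<and> x \<in> U \<and> U \<subseteq> W" if W: "openin X W" "x \<in> W" for W x
  proof -
    obtain f where f: "continuous_map X euclideanreal f" "f x = 0" "f ` (topspace X - W) \<subseteq> {1}"
      using CR[unfolded completely_regular_space_alt', rule_format, OF W] by blast
    define U where "U = {y \<in> topspace X. f y = 0}"
    have "closedin X U"
      using closedin_continuous_map_preimage[OF f(1), of "{0}"] by (simp add: U_def)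
    moreover have "openin X U" unfolding U_def by (rule openin_zero_set_p_space[OF P f(1)])
    moreover have "x \<in> U" "U \<subseteq> W"
      using W f openin_subset unfolding U_def by fastforce+
    ultimately show ?thesis by blast
  qed
  then show ?thesis
    unfolding dimension_le_0_neighbourhood_base_of_clopen
    by (subst open_neighbourhood_base_of) auto
qed

section \<open>Hyperspaces of P-spaces\<close>

lemma topspace_subtopology_vietoris: "H \<subseteq> hyp_K X \<Longrightarrow> topspace (subtopology (vietoris X) H) = H"
  by (auto simp: topspace_vietoris)

lemma p_space_vietoris:
  assumes P: "p_space X" and HK: "H \<subseteq> hyp_K X" and fin: "\<forall>A\<in>H. finite A"
  shows "p_space (subtopology (vietoris X) H)"
  unfolding p_space_iff_countable_Inter
proof (intro allI impI)
  let ?Y = "subtopology (vietoris X) H"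
  fix A \<W> assume A\<W>: "A \<in> topspace ?Y \<and> countable \<W> \<and> (\<forall>W\<in>\<W>. openin ?Y W \<and> A \<in> W)"
  then have AH: "A \<in> H" by (simp add: topspace_subtopology_vietoris[OF HK])
  with HK have AK: "A \<in> hyp_K X" by blast
  have "\<forall>W\<in>\<W>. \<exists>U. (\<forall>a\<in>A. openin X (U a) \<and> a \<in> U a) \<and> H \<inter> vietoris_box X A U \<subseteq> W"
  proof
    fix W assume "W \<in> \<W>"
    with A\<W> show "\<exists>U. (\<forall>a\<in>A. openin X (U a) \<and> a \<in> U a) \<and> H \<inter> vietoris_box X A U \<subseteq> W"
      by (intro vietoris_box_local_base_subtopology) auto
  qed
  then obtain U where U: "\<And>W a. W \<in> \<W> \<Longrightarrow> a \<in> A \<Longrightarrow> openin X (U W a) \<and> a \<in> U W a"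
    "\<And>W. W \<in> \<W> \<Longrightarrow> H \<inter> vietoris_box X A (U W) \<subseteq> W"
    by metis
  \<comment> \<open>the P-property at each of the finitely many points of \<open>A\<close> yields one box inside every \<open>W\<close>\<close>
  have "\<exists>V. openin X V \<and> a \<in> V \<and> V \<subseteq> (\<Inter>W\<in>\<W>. U W a)" if a: "a \<in> A" for a
  proof (rule p_space_countable_Inter_nbhd[OF P])
    show "a \<in> topspace X" using a AK hyp_K_subset_topspace by blast
  qed (use A\<W> U(1)[OF _ a] in auto)
  then obtain V where V: "\<And>a. a \<in> A \<Longrightarrow> openin X (V a) \<and> a \<in> V a \<and> V a \<subseteq> (\<Inter>W\<in>\<W>. U W a)"
    by metis
  have "openin ?Y (H \<inter> vietoris_box X A V)"
    using fin AH AK V by (intro openin_subtopology_Int2 openin_vietoris_box) (auto simp: hyp_K_def)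
  moreover have "A \<in> H \<inter> vietoris_box X A V"
    using AH AK V by (simp add: mem_vietoris_box_self)
  moreover have "H \<inter> vietoris_box X A V \<subseteq> \<Inter>\<W>"
  proof (intro Inter_greatest)
    fix W assume W: "W \<in> \<W>"
    have "vietoris_box X A V \<subseteq> vietoris_box X A (U W)"
      using V W by (intro vietoris_box_mono) blast
    with U(2)[OF W] show "H \<inter> vietoris_box X A V \<subseteq> W" by blast
  qed
  ultimately show "A \<in> ?Y interior_of \<Inter>\<W>"
    unfolding interior_of_def by blast
qed

lemma p_space_of_p_space_vietoris:
  assumes P: "p_space (subtopology (vietoris X) H)" and HK: "H \<subseteq> hyp_K X"
    and sing: "\<And>x. x \<in> topspace X \<Longrightarrow> {x} \<in> H"
  shows "p_space X"
  unfolding p_space_iff_countable_Inter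
proof (intro allI impI)
  let ?Y = "subtopology (vietoris X) H"
  fix x \<U> assume x\<U>: "x \<in> topspace X \<and> countable \<U> \<and> (\<forall>U\<in>\<U>. openin X U \<and> x \<in> U)"
  define \<W> where "\<W> = (\<lambda>U. H \<inter> {B \<in> hyp_K X. B \<subseteq> U}) ` \<U>"
  have "{x} \<in> topspace ?Y" unfolding topspace_subtopology_vietoris[OF HK] using sing x\<U> by simp
  moreover have "countable \<W>" using x\<U> by (simp add: \<W>_def)
  moreover have "openin ?Y W \<and> {x} \<in> W" if W: "W \<in> \<W>" for W
  proof -
    obtain U where U: "U \<in> \<U>" "W = H \<inter> {B \<in> hyp_K X. B \<subseteq> U}" using W by (auto simp: \<W>_def)
    with x\<U> have "openin ?Y W" by (simp add: openin_subtopology_Int2 openin_vietoris_upper)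
    moreover have "{x} \<in> W" using U x\<U> sing by (simp add: hyp_K_def)
    ultimately show ?thesis ..
  qed
  ultimately have "\<exists>W. openin ?Y W \<and> {x} \<in> W \<and> W \<subseteq> \<Inter>\<W>"
    by (rule p_space_countable_Inter_nbhd[OF P])
  then obtain W where W: "openin ?Y W" "{x} \<in> W" "W \<subseteq> \<Inter>\<W>" by blast
  then obtain V where V: "openin X V" "x \<in> V" "H \<inter> {B \<in> hyp_K X. B \<subseteq> V} \<subseteq> W"
    using vietoris_singleton_local_base[OF W(1,2)] by blast
  have "V \<subseteq> \<Inter>\<U>"
  proof
    fix y assume y: "y \<in> V"
    then have "y \<in> topspace X" using V(1) openin_subset by blast
    then have "{y} \<in> H \<inter> {B \<in> hyp_K X. B \<subseteq> V}" using y sing by (simp add: hyp_K_def)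
    with V(3) W(3) show "y \<in> \<Inter>\<U>" unfolding \<W>_def by blast
  qed
  with V show "x \<in> X interior_of \<Inter>\<U>" unfolding interior_of_def by blast
qed

lemma vietoris_dim_le_0:
  assumes X: "X dim_le 0" and HK: "H \<subseteq> hyp_K X" and fin: "\<forall>A\<in>H. finite A"
  shows "subtopology (vietoris X) H dim_le 0"
proof -
  let ?Y = "subtopology (vietoris X) H"
  have clopen_X: "\<exists>C. (closedin X C \<and> openin X C) \<and> x \<in> C \<and> C \<subseteq> U" if "openin X U" "x \<in> U" for U x
    using X that unfolding dimension_le_0_neighbourhood_base_of_clopen
    by (subst (asm) open_neighbourhood_base_of) auto
  have "\<exists>N. (closedin ?Y N \<and> openin ?Y N) \<and> A \<in> N \<and> N \<subseteq> W" if W: "openin ?Y W" "A \<in> W" for W A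
  proof -
    have AH: "A \<in> H" using W openin_subset topspace_subtopology_vietoris[OF HK] by blast
    with HK have AK: "A \<in> hyp_K X" by blast
    obtain U where U: "\<forall>a\<in>A. openin X (U a) \<and> a \<in> U a" "H \<inter> vietoris_box X A U \<subseteq> W"
      using vietoris_box_local_base_subtopology[OF W] by blast
    have "\<forall>a\<in>A. \<exists>C. (closedin X C \<and> openin X C) \<and> a \<in> C \<and> C \<subseteq> U a"
      using U(1) clopen_X by blast
    then obtain C where C: "\<forall>a\<in>A. (closedin X (C a) \<and> openin X (C a)) \<and> a \<in> C a \<and> C a \<subseteq> U a"
      by (rule bchoice[THEN exE])
    have "closedin ?Y (H \<inter> vietoris_box X A C)"
      using fin AH AK C
      by (intro closedin_subtopology_Int_closed closedin_vietoris_box) (auto simp: hyp_K_def)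
    moreover have "openin ?Y (H \<inter> vietoris_box X A C)"
      using fin AH AK C
      by (intro openin_subtopology_Int2 openin_vietoris_box) (auto simp: hyp_K_def)
    moreover have "A \<in> H \<inter> vietoris_box X A C"
      using AH AK C by (simp add: mem_vietoris_box_self)
    moreover have "vietoris_box X A C \<subseteq> vietoris_box X A U"
      using C by (intro vietoris_box_mono) blast
    ultimately show ?thesis using U(2) by (intro exI[of _ "H \<inter> vietoris_box X A C"]) blast
  qed
  then show ?thesis
    unfolding dimension_le_0_neighbourhood_base_of_clopen
    by (subst open_neighbourhood_base_of) auto
qed

lemma t1_space_vietoris:
  assumes "Hausdorff_space X"
  shows "t1_space (vietoris X)"
  unfolding t1_space_def topspace_vietoris
proof (intro ballI impI)
  fix A B assume A: "A \<in> hyp_K X" and B: "B \<in> hyp_K X" and "A \<noteq> B"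
  then consider b where "b \<in> B" "b \<notin> A" | a where "a \<in> A" "a \<notin> B" by blast
  then show "\<exists>W. openin (vietoris X) W \<and> A \<in> W \<and> B \<notin> W"
  proof cases
    case (1 b)
    have "closedin X {b}"
      using 1 B assms hyp_K_subset_topspace by (metis Hausdorff_imp_t1_space closedin_t1_singleton subsetD)
    then have "openin (vietoris X) {C \<in> hyp_K X. C \<subseteq> topspace X - {b}}"
      by (intro openin_vietoris_upper) (simp add: openin_diff)
    with 1 A hyp_K_subset_topspace show ?thesis by blast
  next
    case (2 a)
    \<comment> \<open>here Hausdorff, not just \<open>T\<^sub>1\<close>, is needed: \<open>B\<close> must be closed\<close>
    have "closedin X B" using B assms compactin_imp_closedin by (auto simp: hyp_K_def)
    then have "openin (vietoris X) {C \<in> hyp_K X. C \<inter> (topspace X - B) \<noteq> {}}"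
      by (intro openin_vietoris_lower) (simp add: openin_diff)
    with 2 A hyp_K_subset_topspace show ?thesis by blast
  qed
qed

lemma tychonoff_space_vietoris_p_space:
  assumes P: "p_space X" and TX: "tychonoff_space X" and HK: "H \<subseteq> hyp_K X"
    and fin: "\<forall>A\<in>H. finite A"
  shows "tychonoff_space (subtopology (vietoris X) H)"
proof -
  have CR: "completely_regular_space X" and T1: "t1_space X"
    using TX by (auto simp: tychonoff_space_def)
  have "completely_regular_space (subtopology (vietoris X) H)"
    using vietoris_dim_le_0[OF p_space_dim_le_0[OF P CR] HK fin]
    by (rule zero_dimensional_imp_completely_regular_space)
  moreover have "t1_space (subtopology (vietoris X) H)"
    using CR T1 by (intro t1_space_subtopology t1_space_vietoris regular_t1_imp_Hausdorff_space
        completely_regular_imp_regular_space)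
  ultimately show ?thesis by (simp add: tychonoff_space_def)
qed

section \<open>Zero sets and F'-spaces\<close>

lemma continuous_map_suminf:
  fixes f :: "nat \<Rightarrow> 'a \<Rightarrow> real"
  assumes cont: "\<And>n. continuous_map X euclideanreal (f n)"
    and bound: "\<And>n x. x \<in> topspace X \<Longrightarrow> \<bar>f n x\<bar> \<le> M n" and "summable M"
  shows "continuous_map X euclideanreal (\<lambda>x. \<Sum>n. f n x)"
proof -
  have "uniform_limit (topspace X) (\<lambda>N x. \<Sum>n<N. f n x) (\<lambda>x. \<Sum>n. f n x) sequentially"
    using bound \<open>summable M\<close> by (intro Weierstrass_m_test) auto
  then have "continuous_map X Met_TC.mtopology (\<lambda>x. \<Sum>n. f n x)"
  proof (intro Met_TC.continuous_map_uniform_limit_alt[where F = sequentially])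
    show "\<forall>\<^sub>F N in sequentially. continuous_map X Met_TC.mtopology (\<lambda>x. \<Sum>n<N. f n x)"
      by (intro always_eventually allI) (simp add: continuous_map_sum cont)
  qed (auto simp: uniform_limit_iff)
  then show ?thesis by simp
qed

lemma suminf_halves_unit_interval_maps:
  assumes f: "\<And>n. continuous_map X (top_of_set {0::real..1}) (f n)"
  shows "continuous_map X euclideanreal (\<lambda>x. \<Sum>n. (1/2)^n * f n x)"
    and "x \<in> topspace X \<Longrightarrow> 0 \<le> (\<Sum>n. (1/2)^n * f n x)"
    and "x \<in> topspace X \<Longrightarrow> (\<Sum>n. (1/2)^n * f n x) = 0 \<longleftrightarrow> (\<forall>n. f n x = 0)"
proof -
  have f01: "0 \<le> f n x \<and> f n x \<le> 1" if "x \<in> topspace X" for n x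
    using f[of n] that by (auto simp: continuous_map_in_subtopology Pi_iff)
  have summable: "summable (\<lambda>n. (1/2::real)^n * f n x)" if "x \<in> topspace X" for x
    by (rule summable_comparison_test'[OF summable_geometric[of "1/2"]]) (use f01[OF that] in auto)
  show "continuous_map X euclideanreal (\<lambda>x. \<Sum>n. (1/2)^n * f n x)"
  proof (rule continuous_map_suminf[OF _ _ summable_geometric[of "1/2"]])
    show "continuous_map X euclideanreal (\<lambda>x. (1/2)^n * f n x)" for n
      using f by (intro continuous_map_real_mult_left) (simp add: continuous_map_in_subtopology)
  qed (use f01 in auto)
  show "0 \<le> (\<Sum>n. (1/2)^n * f n x)" if "x \<in> topspace X"
    using summable[OF that] f01[OF that] by (intro suminf_nonneg) auto
  show "(\<Sum>n. (1/2)^n * f n x) = 0 \<longleftrightarrow> (\<forall>n. f n x = 0)" if "x \<in> topspace X"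
    using suminf_eq_zero_iff[OF summable[OF that]] f01[OF that] by simp
qed

lemma completely_regular_gdelta_zero_set:
  assumes CR: "completely_regular_space X" and G: "gdelta_in X G" "p \<in> G"
  shows "\<exists>F. continuous_map X euclideanreal F \<and> F p = 0 \<and> (\<forall>x\<in>topspace X. 0 \<le> F x)
             \<and> (\<forall>x\<in>topspace X - G. 0 < F x)"
proof -
  obtain \<U> where \<U>: "countable \<U>" "\<U> \<subseteq> Collect (openin X)" "\<Inter>\<U> = G"
    using G unfolding gdelta_in_alt intersection_of_def by blast
  \<comment> \<open>\<open>topspace X\<close> is inserted since \<open>from_nat_into\<close> needs a nonempty family\<close>
  define U where "U = from_nat_into (insert (topspace X) \<U>)"
  have rangeU: "range U = insert (topspace X) \<U>"
    unfolding U_def using \<U>(1) by (simp add: range_from_nat_into)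
  have "\<exists>f. continuous_map X (top_of_set {0::real..1}) f \<and> f p = 0 \<and> f ` (topspace X - U n) \<subseteq> {1}" for n
  proof -
    have "p \<in> topspace X" using G gdelta_in_subset by blast
    moreover have "U n \<in> insert (topspace X) \<U>" using rangeU by blast
    ultimately have "closedin X (topspace X - U n) \<and> p \<in> topspace X - (topspace X - U n)"
      using \<U> G by auto
    then show ?thesis by (rule CR[unfolded completely_regular_space_def, rule_format])
  qed
  then obtain f where f: "\<And>n. continuous_map X (top_of_set {0::real..1}) (f n)"
    "\<And>n. f n p = 0" "\<And>n. f n ` (topspace X - U n) \<subseteq> {1}"
    by metis
  define F where "F x = (\<Sum>n. (1/2::real)^n * f n x)" for x
  have "continuous_map X euclideanreal F"
    unfolding F_def by (rule suminf_halves_unit_interval_maps(1)[OF f(1)])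
  moreover have "F p = 0" by (simp add: F_def f(2))
  moreover have nonneg: "0 \<le> F x" if "x \<in> topspace X" for x
    unfolding F_def using that by (rule suminf_halves_unit_interval_maps(2)[OF f(1)])
  moreover have "0 < F x" if x: "x \<in> topspace X - G" for x
  proof -
    obtain n where "x \<notin> U n" using x rangeU \<U>(3) by blast
    then have "f n x \<noteq> 0" using f(3)[of n] x by auto
    then have "F x \<noteq> 0"
      unfolding F_def using suminf_halves_unit_interval_maps(3)[where f = f, OF f(1)] x by blast
    with nonneg x show ?thesis by (simp add: order_le_neq_trans)
  qed
  ultimately show ?thesis by blast
qed

lemma not_p_point_in_closure_cozero:
  assumes CR: "completely_regular_space X" and p: "p \<in> topspace X" "\<not> p_point X p"
  shows "\<exists>F. continuous_map X euclideanreal F \<and> F p = 0 \<and> p \<in> X closure_of {x \<in> topspace X. 0 < F x}"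
proof -
  obtain G where G: "gdelta_in X G" "p \<in> G" "p \<notin> X interior_of G"
    using p unfolding p_point_def by blast
  then obtain F where F: "continuous_map X euclideanreal F" "F p = 0" "\<forall>x\<in>topspace X - G. 0 < F x"
    using completely_regular_gdelta_zero_set[OF CR] by blast
  have "p \<in> X closure_of {x \<in> topspace X. 0 < F x}"
    unfolding in_closure_of
  proof (intro conjI allI impI)
    fix T assume T: "p \<in> T \<and> openin X T"
    then have "\<not> T \<subseteq> G" using G(3) unfolding interior_of_def by blast
    then show "\<exists>y. y \<in> {x \<in> topspace X. 0 < F x} \<and> y \<in> T"
      using T F(3) openin_subset by fastforce
  qed (rule p(1))
  with F show ?thesis by blast
qed

lemma Sup_less_iff_compact:
  fixes S :: "real set"
  assumes "compact S" "S \<noteq> {}"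
  shows "Sup S < a \<longleftrightarrow> (\<forall>s\<in>S. s < a)"
proof
  have bdd: "bdd_above S" using assms(1) by (simp add: bounded_imp_bdd_above compact_imp_bounded)
  show "\<forall>s\<in>S. s < a" if "Sup S < a"
    using that cSup_upper[OF _ bdd] by (meson le_less_trans)
  show "Sup S < a" if "\<forall>s\<in>S. s < a"
    using that assms bdd by (simp add: closed_contains_Sup compact_imp_closed)
qed

lemma continuous_map_vietoris_Sup:
  assumes F: "continuous_map X euclideanreal F"
  shows "continuous_map (vietoris X) euclideanreal (\<lambda>A. Sup (F ` A))"
proof -
  have "a < Sup (F ` A) \<longleftrightarrow> A \<inter> {y \<in> topspace X. a < F y} \<noteq> {}"
    and "Sup (F ` A) < a \<longleftrightarrow> A \<subseteq> {y \<in> topspace X. F y < a}" if A: "A \<in> hyp_K X" for A a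
  proof -
    have "compact (F ` A)" "F ` A \<noteq> {}"
      using A image_compactin[OF _ F] by (auto simp: hyp_K_def)
    moreover have "bdd_above (F ` A)"
      using \<open>compact (F ` A)\<close> by (simp add: bounded_imp_bdd_above compact_imp_bounded)
    moreover have "A \<subseteq> topspace X" using A by (rule hyp_K_subset_topspace)
    ultimately show "a < Sup (F ` A) \<longleftrightarrow> A \<inter> {y \<in> topspace X. a < F y} \<noteq> {}"
      and "Sup (F ` A) < a \<longleftrightarrow> A \<subseteq> {y \<in> topspace X. F y < a}"
      by (auto simp: less_cSup_iff Sup_less_iff_compact)
  qed
  then have "{A \<in> topspace (vietoris X). a < Sup (F ` A)} = {A \<in> hyp_K X. A \<inter> {y \<in> topspace X. a < F y} \<noteq> {}}"
    and "{A \<in> topspace (vietoris X). Sup (F ` A) < a} = {A \<in> hyp_K X. A \<subseteq> {y \<in> topspace X. F y < a}}"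
    for a
    by (auto simp: topspace_vietoris)
  then show ?thesis
    using F unfolding continuous_map_upper_lower_semicontinuous_lt
    by (simp add: openin_vietoris_lower openin_vietoris_upper)
qed

lemma continuous_map_vietoris_Inf:
  assumes "continuous_map X euclideanreal F"
  shows "continuous_map (vietoris X) euclideanreal (\<lambda>A. Inf (F ` A))"
proof -
  have "continuous_map (vietoris X) euclideanreal (\<lambda>A. - Sup ((\<lambda>x. - F x) ` A))"
    using assms by (intro continuous_map_minus continuous_map_vietoris_Sup)
  then show ?thesis by (simp add: Inf_real_def image_image)
qed

lemma cozero_set_positive:
  assumes "continuous_map Y euclideanreal g"
  shows "cozero_set Y {x \<in> topspace Y. 0 < g x}"
  unfolding cozero_set_def
proof (intro exI conjI)
  show "continuous_map Y euclideanreal (\<lambda>x. max 0 (g x))"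
    using assms by (intro continuous_map_real_max) auto
qed auto

lemma f_prime_space_closure_sign_disjoint:
  assumes "f_prime_space Y" "continuous_map Y euclideanreal g"
  shows "Y closure_of {x \<in> topspace Y. 0 < g x} \<inter> Y closure_of {x \<in> topspace Y. g x < 0} = {}"
proof -
  have "cozero_set Y {x \<in> topspace Y. 0 < g x}" "cozero_set Y {x \<in> topspace Y. 0 < - g x}"
    using assms(2) by (intro cozero_set_positive continuous_map_minus; simp)+
  with assms(1) show ?thesis unfolding f_prime_space_def by fastforce
qed

lemma singleton_in_closure_vietoris:
  assumes HK: "H \<subseteq> hyp_K X" and pairs: "\<And>x y. x \<in> topspace X \<Longrightarrow> y \<in> topspace X \<Longrightarrow> {x, y} \<in> H"
    and S: "S \<subseteq> topspace X" and p: "p \<in> X closure_of S"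
  shows "{p} \<in> subtopology (vietoris X) H closure_of ((\<lambda>x. {x}) ` S)"
    and "{p} \<in> subtopology (vietoris X) H closure_of ((\<lambda>x. {p, x}) ` S)"
proof -
  let ?Y = "subtopology (vietoris X) H"
  have p_top: "p \<in> topspace X" using p unfolding in_closure_of by blast
  have top: "{p} \<in> topspace ?Y"
    unfolding topspace_subtopology_vietoris[OF HK] using pairs[OF p_top p_top] by simp
  have near: "\<exists>x\<in>S. {x} \<in> W \<and> {p, x} \<in> W" if W: "openin ?Y W" "{p} \<in> W" for W
  proof -
    obtain U where U: "openin X U" "p \<in> U" "H \<inter> {B \<in> hyp_K X. B \<subseteq> U} \<subseteq> W"
      using vietoris_singleton_local_base[OF W] by blast
    then obtain x where x: "x \<in> S" "x \<in> U"
      using p unfolding in_closure_of by blast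
    with S have "{x} \<in> H" "{p, x} \<in> H" using pairs[of x x] pairs[OF p_top] by auto
    moreover have "{x} \<in> hyp_K X" "{p, x} \<in> hyp_K X"
      using p_top x S by (auto intro: finite_in_hyp_K)
    ultimately have "{x} \<in> W" "{p, x} \<in> W" using U(2,3) x(2) by blast+
    with x(1) show ?thesis by blast
  qed
  show "{p} \<in> ?Y closure_of ((\<lambda>x. {x}) ` S)"
    unfolding in_closure_of using top near by blast
  show "{p} \<in> ?Y closure_of ((\<lambda>x. {p, x}) ` S)"
    unfolding in_closure_of using top near by blast
qed

lemma p_space_of_f_prime_space_vietoris:
  assumes FP: "f_prime_space (subtopology (vietoris X) H)" and CR: "completely_regular_space X"
    and HK: "H \<subseteq> hyp_K X" and pairs: "\<And>x y. x \<in> topspace X \<Longrightarrow> y \<in> topspace X \<Longrightarrow> {x, y} \<in> H"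
  shows "p_space X"
  unfolding p_space_def
proof (intro ballI, rule ccontr)
  let ?Y = "subtopology (vietoris X) H"
  fix p assume p: "p \<in> topspace X" "\<not> p_point X p"
  then obtain F where F: "continuous_map X euclideanreal F" "F p = 0"
    "p \<in> X closure_of {x \<in> topspace X. 0 < F x}"
    using not_p_point_in_closure_cozero[OF CR] by blast
  define S where "S = {x \<in> topspace X. 0 < F x}"
  have S: "S \<subseteq> topspace X" "p \<in> X closure_of S" using F(3) by (auto simp: S_def)
  \<comment> \<open>\<open>g\<close> is negative on the singletons \<open>{x}\<close> and positive on the pairs \<open>{p, x}\<close>, \<open>x \<in> S\<close>\<close>
  define g where "g A = Sup (F ` A) - 2 * Inf (F ` A)" for A
  have "continuous_map (vietoris X) euclideanreal g"
    unfolding g_def using F(1)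
    by (intro continuous_map_diff continuous_map_real_mult_left continuous_map_vietoris_Sup
        continuous_map_vietoris_Inf)
  then have g: "continuous_map ?Y euclideanreal g"
    by (rule continuous_map_from_subtopology)
  have topY: "topspace ?Y = H" by (rule topspace_subtopology_vietoris[OF HK])
  have pos: "(\<lambda>x. {p, x}) ` S \<subseteq> {A \<in> topspace ?Y. 0 < g A}"
  proof
    fix A assume "A \<in> (\<lambda>x. {p, x}) ` S"
    then obtain x where x: "x \<in> topspace X" "0 < F x" "A = {p, x}" by (auto simp: S_def)
    then have "Sup (F ` A) = F x" "Inf (F ` A) = 0"
      using F(2) by (simp_all add: cSup_insert cInf_insert sup_real_def inf_real_def)
    with x show "A \<in> {A \<in> topspace ?Y. 0 < g A}"
      unfolding topY using pairs[OF p(1) x(1)] by (simp add: g_def)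
  qed
  have neg: "(\<lambda>x. {x}) ` S \<subseteq> {A \<in> topspace ?Y. g A < 0}"
    unfolding topY S_def using pairs[of x x for x] by (auto simp: g_def)
  have "{p} \<in> ?Y closure_of {A \<in> topspace ?Y. 0 < g A}"
    by (rule subsetD[OF closure_of_mono[OF pos] singleton_in_closure_vietoris(2)[OF HK pairs S]])
  moreover have "{p} \<in> ?Y closure_of {A \<in> topspace ?Y. g A < 0}"
    by (rule subsetD[OF closure_of_mono[OF neg] singleton_in_closure_vietoris(1)[OF HK pairs S]])
  ultimately show False using f_prime_space_closure_sign_disjoint[OF FP g] by blast
qed

theorem theorem3p7:
  fixes X :: "'a topology" and H :: "'a set set"
  assumes "tychonoff_space X"
    and "hyp_F 2 X \<subseteq> H" and "H \<subseteq> hyp_K X"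
  shows "(p_space X \<longleftrightarrow> p_space (subtopology (vietoris X) H))
       \<and> (p_space (subtopology (vietoris X) H) \<longleftrightarrow> f_prime_space (subtopology (vietoris X) H))"
proof -
  let ?Y = "subtopology (vietoris X) H"
  have CR: "completely_regular_space X" and T1: "t1_space X"
    using assms(1) by (auto simp: tychonoff_space_def)
  have pairs: "\<And>x y. x \<in> topspace X \<Longrightarrow> y \<in> topspace X \<Longrightarrow> {x, y} \<in> H"
    by (rule subsetD[OF assms(2) doubleton_in_hyp_F_2])
  have finite_H: "\<forall>A\<in>H. finite A" if "p_space X"
    using assms(3) finite_compactin_p_space[OF that T1] by (auto simp: hyp_K_def)
  have a_b: "p_space ?Y" if "p_space X"
    by (rule p_space_vietoris[OF that assms(3) finite_H[OF that]])
  have b_a: "p_space X" if "p_space ?Y"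
    by (rule p_space_of_p_space_vietoris[OF that assms(3)]) (use pairs[of x x for x] in simp)
  have b_c: "f_prime_space ?Y" if P: "p_space ?Y"
    using P tychonoff_space_vietoris_p_space[OF b_a[OF P] assms(1,3) finite_H[OF b_a[OF P]]]
    by (rule p_space_imp_f_prime_space)
  have c_a: "p_space X" if "f_prime_space ?Y"
    by (rule p_space_of_f_prime_space_vietoris[OF that CR assms(3) pairs])
  show ?thesis using a_b b_a b_c c_a by blast
qed

end
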